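(* Let $q_1,q_2:\mathbb{R}\to[0,\infty)$ be even probability densities, $r_1,r_2:\mathbb{R}\to\mathbb{R}$ measurable, $A=\sum_i a_i|i\rangle\langle i|$ Hermitian on a finite-dimensional Hilbert space $\mathcal{H}$, $t_1,t_2\ge0$, and suppose $\int|r_m(p)|q_m(a_it_m-p)\,dp<\infty$ for $m=1,2$ and all eigenvalues $a_i$; put $s_m\coloneqq q_m*r_m$. Let $\rho$ be a density operator on $\mathcal{H}$, $|q_m\rangle\coloneqq\int dp\sqrt{q_m(p)}|p\rangle$, and $W\coloneqq e^{i\hat{x}_2\otimes At_2}e^{i\hat{x}_1\otimes At_1}$ acting on (mode 1)$\otimes$(mode 2)$\otimes\mathcal{H}$. Define the joint outcome density $$P(p_1,p_2)\coloneqq\operatorname{Tr}\!\left[(|p_1\rangle\langle p_1|\otimes|p_2\rangle\langle p_2|\otimes I)W(|q_1\rangle\langle q_1|\otimes|q_2\rangle\langle q_2|\otimes\rho)W^\dagger\right].$$ Then $$\int\!\!\int r_1(p_1)r_2(p_2)P(p_1,p_2)\,dp_1\,dp_2=\operatorname{Tr}\!\left[s_1(At_1)\,s_2(At_2)\,\rho\right].$$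
   Context: Each control qumode has Hilbert space $L^2(\mathbb{R})$ with generalized position/momentum eigenbases $\{|x\rangle\},\{|p\rangle\}$, $\langle x|p\rangle=e^{ipx}/\sqrt{2\pi}$; $\hat{x}_m$ is the position quadrature of mode $m$, and for Hermitian $B=\sum_ib_i|i\rangle\langle i|$, $e^{i\hat{x}_m\otimes B}=\sum_i\int dx\,e^{ixb_i}|x\rangle\langle x|_m\otimes|i\rangle\langle i|$. Convolution: $(f*g)(a)=\int f(a-p)g(p)\,dp$; $s_m(At_m)$ by functional calculus. *)

theory Defs
  imports "HOL-Analysis.Analysis"
begin

text \<open>The finite-dimensional Hilbert space H is C^n; operators on H are represented
  as n x n complex matrices, i.e. functions nat => nat => complex of which only the
  entries with indices < n are relevant.\<close>

type_synonym cmat = "nat \<Rightarrow> nat \<Rightarrow> complex"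

definition mmul :: "nat \<Rightarrow> cmat \<Rightarrow> cmat \<Rightarrow> cmat" where
  "mmul n M N = (\<lambda>i j. \<Sum>k<n. M i k * N k j)"

definition mtrace :: "nat \<Rightarrow> cmat \<Rightarrow> complex" where
  "mtrace n M = (\<Sum>i<n. M i i)"

definition orthonormal_basis :: "nat \<Rightarrow> cmat \<Rightarrow> bool" where
  "orthonormal_basis n U \<longleftrightarrow>
     (\<forall>i<n. \<forall>j<n. (\<Sum>k<n. cnj (U k i) * U k j) = (if i = j then 1 else 0))"

definition proj :: "cmat \<Rightarrow> nat \<Rightarrow> cmat" where
  "proj U i = (\<lambda>r c. U r i * cnj (U c i))"

definition fcalc :: "nat \<Rightarrow> (real \<Rightarrow> real) \<Rightarrow> (nat \<Rightarrow> real) \<Rightarrow> cmat \<Rightarrow> cmat" where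
  "fcalc n f b U = (\<lambda>r c. \<Sum>i<n. complex_of_real (f (b i)) * proj U i r c)"

definition spec_mat :: "nat \<Rightarrow> (nat \<Rightarrow> real) \<Rightarrow> cmat \<Rightarrow> cmat" where
  "spec_mat n b U = (\<lambda>r c. \<Sum>i<n. complex_of_real (b i) * proj U i r c)"

definition density_op :: "nat \<Rightarrow> cmat \<Rightarrow> bool" where
  "density_op n \<rho> \<longleftrightarrow>
     (\<forall>i<n. \<forall>j<n. \<rho> i j = cnj (\<rho> j i)) \<and>
     (\<forall>v :: nat \<Rightarrow> complex. Re (\<Sum>i<n. \<Sum>j<n. cnj (v i) * \<rho> i j * v j) \<ge> 0) \<and>
     mtrace n \<rho> = 1"

definition conv :: "(real \<Rightarrow> real) \<Rightarrow> (real \<Rightarrow> real) \<Rightarrow> real \<Rightarrow> real" where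
  "conv f g a = (LINT p|lborel. f (a - p) * g p)"

definition prob_density :: "(real \<Rightarrow> real) \<Rightarrow> bool" where
  "prob_density q \<longleftrightarrow> q \<in> borel_measurable borel \<and> (\<forall>x. q x \<ge> 0) \<and>
     (\<integral>\<^sup>+ x. ennreal (q x) \<partial>lborel) = 1"

text \<open>Operators on (mode 1) (x) (mode 2) (x) H are represented by their kernels in the
  generalized momentum basis: K p1 p2 p1' p2' is the H-operator
  (<p1| (x) <p2| (x) I) K (|p1'> (x) |p2'> (x) I).\<close>
type_synonym kernel = "real \<Rightarrow> real \<Rightarrow> real \<Rightarrow> real \<Rightarrow> cmat"

text \<open>With <x|p> = e^{ipx}/sqrt(2 pi), e^{i x b}|p> = |p + b>, hence for
  B = sum_i b_i|i><i| the controlled operator V = e^{i x_m (x) B}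
  = sum_i int dp |p + b_i><p|_m (x) |i><i|.
  ctrl1/ctrl2 give the kernel of V K V^dagger for V acting on mode 1 / mode 2.\<close>
definition ctrl1 :: "nat \<Rightarrow> (nat \<Rightarrow> real) \<Rightarrow> cmat \<Rightarrow> kernel \<Rightarrow> kernel" where
  "ctrl1 n b U K = (\<lambda>p1 p2 p1' p2'. \<lambda>r c. \<Sum>i<n. \<Sum>j<n.
      mmul n (mmul n (proj U i) (K (p1 - b i) p2 (p1' - b j) p2')) (proj U j) r c)"

definition ctrl2 :: "nat \<Rightarrow> (nat \<Rightarrow> real) \<Rightarrow> cmat \<Rightarrow> kernel \<Rightarrow> kernel" where
  "ctrl2 n b U K = (\<lambda>p1 p2 p1' p2'. \<lambda>r c. \<Sum>i<n. \<Sum>j<n.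
      mmul n (mmul n (proj U i) (K p1 (p2 - b i) p1' (p2' - b j))) (proj U j) r c)"

text \<open>Kernel of |q1><q1| (x) |q2><q2| (x) rho, where |q> = int dp sqrt(q p) |p>.\<close>
definition init_kernel :: "(real \<Rightarrow> real) \<Rightarrow> (real \<Rightarrow> real) \<Rightarrow> cmat \<Rightarrow> kernel" where
  "init_kernel q1 q2 \<rho> = (\<lambda>p1 p2 p1' p2'. \<lambda>r c.
      complex_of_real (sqrt (q1 p1) * sqrt (q2 p2) * sqrt (q1 p1') * sqrt (q2 p2')) * \<rho> r c)"

definition joint_density ::
  "nat \<Rightarrow> (nat \<Rightarrow> real) \<Rightarrow> cmat \<Rightarrow> real \<Rightarrow> real \<Rightarrow> (real \<Rightarrow> real) \<Rightarrow> (real \<Rightarrow> real)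
     \<Rightarrow> cmat \<Rightarrow> real \<Rightarrow> real \<Rightarrow> complex" where
  "joint_density n a U t1 t2 q1 q2 \<rho> p1 p2 =
     mtrace n (ctrl2 n (\<lambda>i. a i * t2) U (ctrl1 n (\<lambda>i. a i * t1) U (init_kernel q1 q2 \<rho>))
                p1 p2 p1 p2)"

end

theory Submission imports Defs begin

text \<open>In the eigenbasis of A the controlled gate e^{i x_m (x) A t_m} acts on the i-th
  eigenspace as the momentum shift |p> \<mapsto> |p + a_i t_m>. Against the diagonal
  projector |p1><p1| (x) |p2><p2| all terms coupling different eigenspaces vanish under
  the trace, so P(p1,p2) = \<Sum>_i q1(p1 - a_i t1) q2(p2 - a_i t2) <i|\<rho>|i>: a mixture of
  shifted copies of q1 (x) q2, weighted by the populations of \<rho>. Integrating against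
  r1 r2 factorises over the two modes, and by evenness of q_m each factor is the
  convolution s_m(a_i t_m), which is exactly the i-th term of Tr[s1(A t1) s2(A t2) \<rho>].\<close>

lemma mmul_assoc: "mmul n (mmul n A B) C = mmul n A (mmul n B C)"
  unfolding mmul_def
  by (auto simp: sum_distrib_left sum_distrib_right mult.assoc intro!: ext sum.swap[THEN trans] sum.cong)

lemma mmul_sum_left: "mmul n (\<lambda>r c. \<Sum>i\<in>I. M i r c) B = (\<lambda>r c. \<Sum>i\<in>I. mmul n (M i) B r c)"
  unfolding mmul_def by (auto simp: sum_distrib_right intro!: ext sum.swap)

lemma mmul_sum_right: "mmul n A (\<lambda>r c. \<Sum>i\<in>I. M i r c) = (\<lambda>r c. \<Sum>i\<in>I. mmul n A (M i) r c)"
  unfolding mmul_def by (auto simp: sum_distrib_left intro!: ext sum.swap)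

lemma mmul_scale_left: "mmul n (\<lambda>r c. \<alpha> * M r c) B = (\<lambda>r c. \<alpha> * mmul n M B r c)"
  unfolding mmul_def by (auto simp: sum_distrib_left mult.assoc)

lemma mmul_scale_right: "mmul n A (\<lambda>r c. \<alpha> * M r c) = (\<lambda>r c. \<alpha> * mmul n A M r c)"
  unfolding mmul_def by (auto simp: sum_distrib_left mult.left_commute)

lemma mmul_zero_left [simp]: "mmul n (\<lambda>r c. 0) B = (\<lambda>r c. 0)"
  unfolding mmul_def by simp

lemma mtrace_zero [simp]: "mtrace n (\<lambda>r c. 0) = 0"
  unfolding mtrace_def by simp

lemma mtrace_sum: "mtrace n (\<lambda>r c. \<Sum>i\<in>I. M i r c) = (\<Sum>i\<in>I. mtrace n (M i))"
  unfolding mtrace_def by (rule sum.swap)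

lemma mtrace_scale: "mtrace n (\<lambda>r c. \<alpha> * M r c) = \<alpha> * mtrace n M"
  unfolding mtrace_def by (simp add: sum_distrib_left)

lemma mtrace_mmul_commute: "mtrace n (mmul n A B) = mtrace n (mmul n B A)"
  unfolding mtrace_def mmul_def by (subst sum.swap) (simp add: mult.commute)

lemma mmul_proj_proj:
  assumes U: "orthonormal_basis n U" and "i < n" "j < n"
  shows "mmul n (proj U i) (proj U j) = (if i = j then proj U i else (\<lambda>r c. 0))"
proof -
  have "mmul n (proj U i) (proj U j) = (\<lambda>r c. U r i * cnj (U c j) * (\<Sum>k<n. cnj (U k i) * U k j))"
    unfolding mmul_def proj_def by (auto intro!: ext sum.cong simp: sum_distrib_left mult_ac)
  then show ?thesis
    using assms unfolding orthonormal_basis_def proj_def by auto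
qed

lemma mtrace_proj_sandwich:
  assumes U: "orthonormal_basis n U" and "i < n" "j < n"
  shows "mtrace n (mmul n (mmul n (proj U i) X) (proj U j))
           = (if i = j then mtrace n (mmul n (proj U i) X) else 0)"
proof -
  have "mtrace n (mmul n (mmul n (proj U i) X) (proj U j))
          = mtrace n (mmul n (mmul n (proj U j) (proj U i)) X)"
    using mtrace_mmul_commute[of n "mmul n (proj U i) X" "proj U j"] by (simp add: mmul_assoc)
  then show ?thesis
    using mmul_proj_proj[OF U assms(3,2)] by auto
qed

definition block_mat :: "nat \<Rightarrow> cmat \<Rightarrow> (nat \<Rightarrow> nat \<Rightarrow> cmat) \<Rightarrow> cmat" where
  "block_mat n U X = (\<lambda>r c. \<Sum>i<n. \<Sum>j<n. mmul n (mmul n (proj U i) (X i j)) (proj U j) r c)"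

lemma ctrl1_eq_block_mat:
  "ctrl1 n b U K p1 p2 p1' p2' = block_mat n U (\<lambda>i j. K (p1 - b i) p2 (p1' - b j) p2')"
  unfolding ctrl1_def block_mat_def ..

lemma ctrl2_eq_block_mat:
  "ctrl2 n b U K p1 p2 p1' p2' = block_mat n U (\<lambda>i j. K p1 (p2 - b i) p1' (p2' - b j))"
  unfolding ctrl2_def block_mat_def ..

lemma mtrace_block_mat:
  assumes U: "orthonormal_basis n U"
  shows "mtrace n (block_mat n U X) = (\<Sum>i<n. mtrace n (mmul n (proj U i) (X i i)))"
  unfolding block_mat_def mtrace_sum
  by (intro sum.cong refl) (simp add: mtrace_proj_sandwich[OF U] if_distrib cong: if_cong)

lemma mtrace_proj_block_mat:
  assumes U: "orthonormal_basis n U" and k: "k < n"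
  shows "mtrace n (mmul n (proj U k) (block_mat n U X)) = mtrace n (mmul n (proj U k) (X k k))"
proof -
  have term_eq: "mtrace n (mmul n (proj U k) (mmul n (mmul n (proj U i) (X i j)) (proj U j)))
          = (if i = k then if j = k then mtrace n (mmul n (proj U k) (X k k)) else 0 else 0)"
    if "i < n" "j < n" for i j
    using mmul_proj_proj[OF U k that(1)] mtrace_proj_sandwich[OF U k that(2), of "X k j"]
    by (auto simp: mmul_assoc[symmetric])
  have "mtrace n (mmul n (proj U k) (block_mat n U X))
          = (\<Sum>i<n. \<Sum>j<n. if i = k then if j = k then mtrace n (mmul n (proj U k) (X k k)) else 0 else 0)"
    unfolding block_mat_def mmul_sum_right mtrace_sum by (intro sum.cong refl) (simp add: term_eq)
  also have "\<dots> = mtrace n (mmul n (proj U k) (X k k))"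
    using k by (simp add: sum.If_cases)
  finally show ?thesis .
qed

lemma joint_density_eq:
  assumes U: "orthonormal_basis n U" and q1: "\<And>x. q1 x \<ge> 0" and q2: "\<And>x. q2 x \<ge> 0"
  shows "joint_density n a U t1 t2 q1 q2 \<rho> p1 p2 =
    (\<Sum>i<n. complex_of_real (q1 (p1 - a i * t1) * q2 (p2 - a i * t2)) * mtrace n (mmul n (proj U i) \<rho>))"
proof -
  have "sqrt (q1 x) * sqrt (q2 y) * sqrt (q1 x) * sqrt (q2 y)
          = (sqrt (q1 x) * sqrt (q1 x)) * (sqrt (q2 y) * sqrt (q2 y))" for x y
    by (simp add: mult_ac)
  also have "\<dots> x y = q1 x * q2 y" for x y
    using q1 q2 by simp
  finally have sqrt_cancel: "sqrt (q1 x) * sqrt (q2 y) * sqrt (q1 x) * sqrt (q2 y) = q1 x * q2 y" for x y .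
  show ?thesis
    unfolding joint_density_def ctrl2_eq_block_mat mtrace_block_mat[OF U] ctrl1_eq_block_mat
    by (intro sum.cong refl)
      (simp add: mtrace_proj_block_mat[OF U] init_kernel_def mmul_scale_right mtrace_scale sqrt_cancel
        del: of_real_mult)
qed

definition diag_op :: "nat \<Rightarrow> cmat \<Rightarrow> (nat \<Rightarrow> complex) \<Rightarrow> cmat" where
  "diag_op n U \<alpha> = (\<lambda>r c. \<Sum>i<n. \<alpha> i * proj U i r c)"

lemma fcalc_eq_diag_op: "fcalc n f b U = diag_op n U (\<lambda>i. complex_of_real (f (b i)))"
  unfolding fcalc_def diag_op_def ..

lemma mmul_diag_op:
  assumes U: "orthonormal_basis n U"
  shows "mmul n (diag_op n U \<alpha>) (diag_op n U \<beta>) = diag_op n U (\<lambda>i. \<alpha> i * \<beta> i)"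
proof -
  have "(\<Sum>j<n. \<alpha> i * (\<beta> j * mmul n (proj U i) (proj U j) r c))
          = (\<Sum>j<n. if j = i then \<alpha> i * \<beta> i * proj U i r c else 0)" if "i < n" for i r c
    using mmul_proj_proj[OF U that] by (intro sum.cong refl) auto
  then show ?thesis
    unfolding diag_op_def mmul_sum_left mmul_sum_right mmul_scale_left mmul_scale_right
    by (intro ext sum.cong refl) simp
qed

lemma mtrace_diag_op_mmul:
  "mtrace n (mmul n (diag_op n U \<alpha>) X) = (\<Sum>i<n. \<alpha> i * mtrace n (mmul n (proj U i) X))"
  unfolding diag_op_def mmul_sum_left mmul_scale_left mtrace_sum mtrace_scale ..

lemma has_bochner_integral_conv_even:
  fixes q r :: "real \<Rightarrow> real"
  assumes q: "q \<in> borel_measurable borel" "\<And>x. q x \<ge> 0" and q_even: "\<And>x. q (- x) = q x"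
    and r: "r \<in> borel_measurable borel"
    and fin: "(\<integral>\<^sup>+ p. ennreal (\<bar>r p\<bar> * q (b - p)) \<partial>lborel) < \<infinity>"
  shows "has_bochner_integral lborel (\<lambda>p. r p * q (p - b)) (conv q r b)"
proof -
  have q_flip: "q (p - b) = q (b - p)" for p
    using q_even[of "b - p"] by simp
  have "(\<lambda>p. r p * q (p - b)) \<in> borel_measurable lborel"
    using q r by measurable
  moreover have "(\<integral>\<^sup>+ p. ennreal (norm (r p * q (p - b))) \<partial>lborel) < \<infinity>"
    using fin by (simp add: q_flip abs_mult q(2))
  ultimately have "integrable lborel (\<lambda>p. r p * q (p - b))"
    by (rule integrableI_bounded)
  then show ?thesis
    unfolding conv_def has_bochner_integral_iff by (simp add: q_flip mult.commute)
qed

lemma integral_sum_product: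
  fixes f g :: "'i \<Rightarrow> 'a \<Rightarrow> real" and w :: "'i \<Rightarrow> complex"
  assumes f: "\<And>i. i \<in> I \<Longrightarrow> has_bochner_integral M (f i) (F i)"
    and g: "\<And>i. i \<in> I \<Longrightarrow> has_bochner_integral N (g i) (G i)"
  shows "(LINT y|N. LINT x|M. (\<Sum>i\<in>I. complex_of_real (f i x * g i y) * w i))
           = (\<Sum>i\<in>I. complex_of_real (F i * G i) * w i)"
proof -
  have "(LINT x|M. (\<Sum>i\<in>I. complex_of_real (f i x * g i y) * w i))
          = (\<Sum>i\<in>I. complex_of_real (g i y) * (complex_of_real (F i) * w i))" for y
    using f by (simp add: has_bochner_integral_iff mult_ac)
  then show ?thesis
    using g by (simp add: has_bochner_integral_iff mult_ac)
qed

theorem theorem9: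
  fixes n :: nat and a :: "nat \<Rightarrow> real" and U A \<rho> :: cmat
    and q1 q2 r1 r2 :: "real \<Rightarrow> real" and t1 t2 :: real
  assumes q1: "prob_density q1" and q1_even: "\<And>x. q1 (- x) = q1 x"
    and q2: "prob_density q2" and q2_even: "\<And>x. q2 (- x) = q2 x"
    and r1: "r1 \<in> borel_measurable borel" and r2: "r2 \<in> borel_measurable borel"
    and U: "orthonormal_basis n U" and A: "A = spec_mat n a U"
    and t1: "t1 \<ge> 0" and t2: "t2 \<ge> 0"
    and int1: "\<And>i. i < n \<Longrightarrow> (\<integral>\<^sup>+ p. ennreal (\<bar>r1 p\<bar> * q1 (a i * t1 - p)) \<partial>lborel) < \<infinity>"
    and int2: "\<And>i. i < n \<Longrightarrow> (\<integral>\<^sup>+ p. ennreal (\<bar>r2 p\<bar> * q2 (a i * t2 - p)) \<partial>lborel) < \<infinity>"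
    and rho: "density_op n \<rho>"
  shows "(LINT p2|lborel. LINT p1|lborel.
            complex_of_real (r1 p1 * r2 p2) * joint_density n a U t1 t2 q1 q2 \<rho> p1 p2)
         = mtrace n (mmul n (mmul n (fcalc n (conv q1 r1) (\<lambda>i. a i * t1) U)
                                   (fcalc n (conv q2 r2) (\<lambda>i. a i * t2) U)) \<rho>)"
proof -
  have q1_meas: "q1 \<in> borel_measurable borel" and q1_nonneg: "\<And>x. q1 x \<ge> 0"
    and q2_meas: "q2 \<in> borel_measurable borel" and q2_nonneg: "\<And>x. q2 x \<ge> 0"
    using q1 q2 unfolding prob_density_def by auto
  define w where "w i = mtrace n (mmul n (proj U i) \<rho>)" for i
  have integrand: "complex_of_real (r1 p1 * r2 p2) * joint_density n a U t1 t2 q1 q2 \<rho> p1 p2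
      = (\<Sum>i<n. complex_of_real ((r1 p1 * q1 (p1 - a i * t1)) * (r2 p2 * q2 (p2 - a i * t2))) * w i)"
    for p1 p2
    unfolding joint_density_eq[OF U q1_nonneg q2_nonneg] w_def sum_distrib_left
    by (simp add: mult_ac)
  have "(LINT p2|lborel. LINT p1|lborel.
            complex_of_real (r1 p1 * r2 p2) * joint_density n a U t1 t2 q1 q2 \<rho> p1 p2)
        = (\<Sum>i<n. complex_of_real (conv q1 r1 (a i * t1) * conv q2 r2 (a i * t2)) * w i)"
    unfolding integrand
    by (intro integral_sum_product has_bochner_integral_conv_even
        q1_meas q1_nonneg q1_even r1 int1 q2_meas q2_nonneg q2_even r2 int2) simp_all
  also have "\<dots> = mtrace n (mmul n (mmul n (fcalc n (conv q1 r1) (\<lambda>i. a i * t1) U)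
                                   (fcalc n (conv q2 r2) (\<lambda>i. a i * t2) U)) \<rho>)"
    unfolding fcalc_eq_diag_op mmul_diag_op[OF U] mtrace_diag_op_mmul w_def by simp
  finally show ?thesis .
qed

end
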